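(* Let $\mathbf{t}$ be the Thue-Morse sequence. For every nonnegative integer $n$, $\mathbf{t}$ has an unbordered factor of length $n$ if and only if the base-$2$ representation of $n$ (written starting with the most significant digit, without leading zeroes) is not of the form $1(01^*0)^*10^*1$, i.e., does not belong to the regular language denoted by this regular expression.
   Context: The Thue-Morse sequence is $\mathbf{t} = t(0)t(1)t(2)\cdots = 0110100110010110\cdots$, where $t(n)$ is the sum modulo $2$ of the binary digits of $n$. For an infinite sequence $\mathbf{x}$, a factor of length $n$ is a word $\mathbf{x}[i..i+n-1] = \mathbf{x}[i]\mathbf{x}[i+1]\cdots\mathbf{x}[i+n-1]$ for some $i \geq 0$. A finite word $w$ is bordered if there is a word $x$ with $0 < |x| \leq |w|/2$ such that $w$ both begins and ends with $x$; otherwise $w$ is unbordered. In the regular expression, $^*$ denotes Kleene star and juxtaposition denotes concatenation. *)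

theory Defs
  imports Main "HOL-Library.Sublist"
begin

fun bin :: "nat \<Rightarrow> nat list" where
  "bin n = (if n = 0 then [] else bin (n div 2) @ [n mod 2])"

declare bin.simps [simp del]

definition thue_morse :: "nat \<Rightarrow> nat" where
  "thue_morse n = sum_list (bin n) mod 2"

definition factor :: "(nat \<Rightarrow> 'a) \<Rightarrow> nat \<Rightarrow> nat \<Rightarrow> 'a list" where
  "factor x i n = map x [i..<i+n]"

definition bordered :: "'a list \<Rightarrow> bool" where
  "bordered w \<longleftrightarrow> (\<exists>x. 0 < length x \<and> 2 * length x \<le> length w \<and> prefix x w \<and> suffix x w)"

definition unbordered :: "'a list \<Rightarrow> bool" where
  "unbordered w \<longleftrightarrow> \<not> bordered w"

definition lconc :: "'a list set \<Rightarrow> 'a list set \<Rightarrow> 'a list set" where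
  "lconc A B = {u @ v |u v. u \<in> A \<and> v \<in> B}"

definition lstar :: "'a list set \<Rightarrow> 'a list set" where
  "lstar A = {concat ws |ws. set ws \<subseteq> A}"

text \<open>The regular language 1(01*0)*10*1 over the digits {0,1}.\<close>
definition L_exc :: "nat list set" where
  "L_exc = lconc {[1]}
            (lconc (lstar (lconc {[0]} (lconc (lstar {[1]}) {[0]})))
              (lconc {[1]} (lconc (lstar {[0]}) {[1]})))"

end

theory Submission
  imports Defs
begin

text \<open>
  A factor of \<open>t\<close> of length \<open>n \<ge> 4\<close> sits inside the image, under the morphism
  \<open>0 \<mapsto> 01, 1 \<mapsto> 10\<close> fixing \<open>t\<close>, of a factor of length about \<open>n/2\<close>. Two positions of \<open>t\<close> of
  different parity never start equal blocks of length 4, so a border of length at least 4 has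
  even shift and comes from a border of that shorter factor; only borders of length at most 3
  are new. Hence whether the set of borders is empty, \<open>{1}\<close> or larger, together with the
  first and last two letters, is transformed by a fixed finite map determined by the parities
  of the position and the length. The sets of such data realised at the lengths \<open>n, n+1, n+2\<close>
  therefore evolve by a finite automaton reading the binary expansion of \<open>n\<close>, and the
  reachable part of its product with an automaton for \<open>1(01\<^sup>*0)\<^sup>*10\<^sup>*1\<close> shows that
  an unbordered factor exists exactly when that automaton rejects.
\<close>

lemma bin_append_digit: "b < 2 \<Longrightarrow> 0 < 2 * n + b \<Longrightarrow> bin (2 * n + b) = bin n @ [b]"
  by (subst bin.simps) simp

definition tm :: "nat \<Rightarrow> bool" where
  "tm n \<longleftrightarrow> thue_morse n = 1"

lemma thue_morse_eq_iff_tm: "thue_morse x = thue_morse y \<longleftrightarrow> tm x = tm y"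
proof -
  have "thue_morse z \<le> 1" for z
    by (simp add: thue_morse_def)
  from this[of x] this[of y] show ?thesis
    unfolding tm_def by linarith
qed

lemma tm_double [simp]: "tm (2 * n) = tm n"
proof (cases "n = 0")
  case False
  then show ?thesis
    using bin_append_digit[of 0 n] by (simp add: tm_def thue_morse_def)
qed simp

lemma tm_Suc_double [simp]: "tm (Suc (2 * n)) \<longleftrightarrow> \<not> tm n"
proof -
  have "(s + 1) mod 2 = 1 \<longleftrightarrow> s mod 2 \<noteq> 1" for s :: nat
    by presburger
  then show ?thesis
    using bin_append_digit[of 1 n] by (simp add: tm_def thue_morse_def)
qed

lemma tm_eq_div2: "tm x \<longleftrightarrow> tm (x div 2) \<noteq> odd x"
  using tm_double[of "x div 2"] tm_Suc_double[of "x div 2"]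
  by (cases "even x") (simp_all add: odd_two_times_div_two_succ)

lemma tm_Suc_eq_div2: "tm (p + 1) \<longleftrightarrow> (if odd p then tm (p div 2 + 1) else \<not> tm (p div 2))"
proof (cases "even p")
  case True
  then obtain r where "p = 2 * r" ..
  then show ?thesis
    by simp
next
  case False
  then obtain r where "p = 2 * r + 1"
    by (rule oddE)
  then have "p + 1 = 2 * (r + 1)" "p div 2 = r"
    by simp_all
  with False show ?thesis
    by (simp only: tm_double) simp
qed

lemma tm_add2_eq_div2: "tm (p + 2) \<longleftrightarrow> tm (p div 2 + 1) \<noteq> odd p"
  using tm_eq_div2[of "p + 2"] by simp

lemma tm_diff1_eq_div2:
  assumes "0 < l"
  shows "tm (l - 1) \<longleftrightarrow> (if odd l then tm (l div 2) else \<not> tm (l div 2 - 1))"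
proof (cases "even l")
  case True
  then obtain r where r: "l = 2 * r" ..
  with assms have "l - 1 = Suc (2 * (r - 1))" "l div 2 - 1 = r - 1"
    by simp_all
  with True show ?thesis
    by (simp only: tm_Suc_double) simp
next
  case False
  then obtain r where "l = 2 * r + 1"
    by (rule oddE)
  with False show ?thesis
    by simp
qed

lemma tm_diff2_eq_div2:
  assumes "1 < l"
  shows "tm (l - 2) \<longleftrightarrow> tm (l div 2 - 1) \<noteq> odd l"
proof -
  have "(l - 2) div 2 = l div 2 - 1" "odd (l - 2) \<longleftrightarrow> odd l"
    using assms by presburger+
  then show ?thesis
    using tm_eq_div2[of "l - 2"] by simp
qed

lemma tm_upto_7: "\<not> tm 0" "tm 1" "tm 2" "\<not> tm 3" "tm 4" "\<not> tm 5" "\<not> tm 6" "tm 7"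
  by (simp_all add: tm_def thue_morse_def bin.simps)

lemma tm_even_pair: "even p \<Longrightarrow> tm (p + 1) \<longleftrightarrow> \<not> tm p"
  by (elim evenE) simp

lemma tm_not_three_equal: "\<not> (tm y = tm (y + 1) \<and> tm (y + 1) = tm (y + 2))"
proof (cases "even y")
  case True
  then show ?thesis
    using tm_even_pair[of y] by blast
next
  case False
  then show ?thesis
    using tm_even_pair[of "y + 1"] by (simp add: add.assoc)
qed

lemma tm_factors_2: "range (\<lambda>i. (tm i, tm (i + 1))) = UNIV"
proof -
  have w: "(tm i, tm (i + 1)) \<in> range (\<lambda>i. (tm i, tm (i + 1)))" for i
    by blast
  have "(a, b) \<in> range (\<lambda>i. (tm i, tm (i + 1)))" for a b
    using w[of 0] w[of 1] w[of 2] w[of 5] tm_upto_7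
    by (cases a; cases b) (simp_all add: eval_nat_numeral)
  then show ?thesis
    by auto
qed

lemma tm_factors_3: "range (\<lambda>i. (tm i, tm (i + 1), tm (i + 2))) = {(a, b, c). \<not> (a = b \<and> b = c)}"
proof -
  have w: "(tm i, tm (i + 1), tm (i + 2)) \<in> range (\<lambda>i. (tm i, tm (i + 1), tm (i + 2)))" for i
    by blast
  have "(a, b, c) \<in> range (\<lambda>i. (tm i, tm (i + 1), tm (i + 2)))" if "\<not> (a = b \<and> b = c)" for a b c
    using that w[of 0] w[of 1] w[of 2] w[of 3] w[of 4] w[of 5] tm_upto_7
    by (cases a; cases b; cases c) (simp_all add: eval_nat_numeral)
  then show ?thesis
    using tm_not_three_equal by auto
qed

lemma tm_alternating_even:
  assumes "tm (q + 1) \<noteq> tm q" "tm (q + 2) \<noteq> tm (q + 1)" "tm (q + 3) \<noteq> tm (q + 2)"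
  shows "even q"
proof (rule ccontr)
  assume "odd q"
  then obtain r where "q = 2 * r + 1"
    by (rule oddE)
  then have "q = Suc (2 * r)" "q + 1 = 2 * (r + 1)" "q + 2 = Suc (2 * (r + 1))" "q + 3 = 2 * (r + 2)"
    by simp_all
  with assms tm_not_three_equal[of r] show False
    by (simp only: tm_double tm_Suc_double) (simp add: add.assoc)
qed

lemma tm_match4_even:
  assumes match: "\<forall>j<4. tm (p + j) = tm (q + j)" and "even p"
  shows "even q"
proof (rule ccontr)
  assume "odd q"
  have "tm (p + j) = tm (q + j)" if "j < 4" for j
    using match that by blast
  note m = this[of 0] this[of 1] this[of 2] this[of 3]
  have "even (p + 2)" "even (q + 1)"
    using \<open>even p\<close> \<open>odd q\<close> by simp_all
  with \<open>even p\<close> have "tm (p + 1) \<noteq> tm p" "tm (p + 3) \<noteq> tm (p + 2)" "tm (q + 2) \<noteq> tm (q + 1)"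
    using tm_even_pair[of p] tm_even_pair[of "p + 2"] tm_even_pair[of "q + 1"]
    by (simp_all add: add.assoc numeral_3_eq_3)
  with m have "even q"
    by (intro tm_alternating_even) simp_all
  with \<open>odd q\<close> show False ..
qed

lemma tm_match4_parity: "\<forall>j<4. tm (p + j) = tm (q + j) \<Longrightarrow> even p \<longleftrightarrow> even q"
  using tm_match4_even[of p q] tm_match4_even[of q p] by auto

section \<open>Borders of factors\<close>

text \<open>Overlapping borders, with \<open>k > n / 2\<close>, are allowed.\<close>

definition border_at :: "(nat \<Rightarrow> 'a) \<Rightarrow> nat \<Rightarrow> nat \<Rightarrow> nat \<Rightarrow> bool" where
  "border_at x i n k \<longleftrightarrow> (\<forall>j<k. x (i + j) = x (i + (n - k) + j))"

lemma bordered_iff_take_eq_drop: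
  "bordered w \<longleftrightarrow> (\<exists>k. 0 < k \<and> 2 * k \<le> length w \<and> take k w = drop (length w - k) w)"
proof
  assume "bordered w"
  then obtain u where u: "0 < length u" "2 * length u \<le> length w" "prefix u w" "suffix u w"
    unfolding bordered_def by blast
  from u(3) have "take (length u) w = u"
    by (auto simp: prefix_def)
  moreover from u(4) have "drop (length w - length u) w = u"
    by (auto simp: suffix_def)
  ultimately show "\<exists>k. 0 < k \<and> 2 * k \<le> length w \<and> take k w = drop (length w - k) w"
    using u(1,2) by metis
next
  assume "\<exists>k. 0 < k \<and> 2 * k \<le> length w \<and> take k w = drop (length w - k) w"
  then obtain k where k: "0 < k" "2 * k \<le> length w" "take k w = drop (length w - k) w"
    by blast
  then show "bordered w"
    unfolding bordered_def using take_is_prefix[of k w] suffix_drop[of "length w - k" w]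
    by (intro exI[of _ "take k w"]) auto
qed

lemma border_at_iff_take_eq_drop:
  "k \<le> n \<Longrightarrow> border_at x i n k \<longleftrightarrow> take k (factor x i n) = drop (n - k) (factor x i n)"
  by (auto simp: border_at_def factor_def list_eq_iff_nth_eq take_map drop_map add.assoc)

lemma border_at_shorten:
  assumes "border_at x i n k" "n < 2 * k" "k < n"
  shows "border_at x i n (2 * k - n)"
  unfolding border_at_def
proof (intro allI impI)
  fix j
  assume "j < 2 * k - n"
  then have "j < k" "n - k + j < k"
    using assms(2,3) by linarith+
  then have "x (i + j) = x (i + (n - k) + j)"
    and "x (i + (n - k + j)) = x (i + (n - k) + (n - k + j))"
    using assms(1) unfolding border_at_def by blast+
  moreover have "i + (n - k) + (n - k + j) = i + (n - (2 * k - n)) + j"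
    using assms(2,3) by simp
  ultimately show "x (i + j) = x (i + (n - (2 * k - n)) + j)"
    by (metis add.assoc)
qed

lemma border_at_half:
  "border_at x i n k \<Longrightarrow> 0 < k \<Longrightarrow> k < n \<Longrightarrow> \<exists>k'. 0 < k' \<and> 2 * k' \<le> n \<and> border_at x i n k'"
proof (induction k rule: less_induct)
  case (less k)
  show ?case
  proof (cases "2 * k \<le> n")
    case False
    then show ?thesis
      using less.IH[of "2 * k - n"] border_at_shorten[OF less.prems(1)] less.prems(3) by simp
  qed (use less.prems in blast)
qed

lemma bordered_factor_iff: "bordered (factor x i n) \<longleftrightarrow> (\<exists>k. 0 < k \<and> k < n \<and> border_at x i n k)"
proof -
  have "bordered (factor x i n) \<longleftrightarrow> (\<exists>k. 0 < k \<and> 2 * k \<le> n \<and> border_at x i n k)"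
    unfolding bordered_iff_take_eq_drop by (auto simp: factor_def border_at_iff_take_eq_drop)
  also have "\<dots> \<longleftrightarrow> (\<exists>k. 0 < k \<and> k < n \<and> border_at x i n k)"
    using border_at_half by fastforce
  finally show ?thesis .
qed

lemma border_at_thue_morse: "border_at thue_morse i n k \<longleftrightarrow> border_at tm i n k"
  by (simp add: border_at_def thue_morse_eq_iff_tm)

lemma border_at_iff_shift: "border_at x i n k \<longleftrightarrow> (\<forall>y\<in>{i..<i + k}. x y = x (y + (n - k)))"
  unfolding border_at_def
proof (intro iffI allI impI ballI)
  fix y
  assume "\<forall>j<k. x (i + j) = x (i + (n - k) + j)" "y \<in> {i..<i + k}"
  then show "x y = x (y + (n - k))"
    by (auto dest: spec[of _ "y - i"] simp: algebra_simps)
qed (auto simp: algebra_simps)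

lemma border_at_1: "0 < n \<Longrightarrow> border_at x i n 1 \<longleftrightarrow> x i = x (i + n - 1)"
  by (simp add: border_at_def)

lemma border_at_2: "2 \<le> n \<Longrightarrow> border_at x i n 2 \<longleftrightarrow> x i = x (i + n - 2) \<and> x (i + 1) = x (i + n - 1)"
  by (auto simp: border_at_def less_Suc_eq numeral_2_eq_2)

lemma border_at_3:
  "3 \<le> n \<Longrightarrow>
    border_at x i n 3 \<longleftrightarrow> x i = x (i + n - 3) \<and> x (i + 1) = x (i + n - 2) \<and> x (i + 2) = x (i + n - 1)"
  by (auto simp: border_at_def less_Suc_eq numeral_3_eq_3 numeral_2_eq_2)

lemma short_borders_odd_shift:
  assumes "4 \<le> n"
  shows "{k \<in> {1, 2, 3}. odd (n - k) \<and> border_at x i n k} =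
      (if even n \<and> x i = x (i + n - 1) then {1} else {})
    \<union> (if odd n \<and> x i = x (i + n - 2) \<and> x (i + 1) = x (i + n - 1) then {2} else {})
    \<union> (if even n \<and> x i = x (i + n - 3) \<and> x (i + 1) = x (i + n - 2) \<and> x (i + 2) = x (i + n - 1)
        then {3} else {})"
proof -
  have "{k \<in> {1, 2, 3}. P k} =
      (if P 1 then {1} else {}) \<union> (if P 2 then {2} else {}) \<union> (if P 3 then {3} else {})"
    for P :: "nat \<Rightarrow> bool"
    by auto
  note split = this[of "\<lambda>k. odd (n - k) \<and> border_at x i n k"]
  have "odd (n - 1) \<longleftrightarrow> even n" "odd (n - 2) \<longleftrightarrow> odd n" "odd (n - 3) \<longleftrightarrow> even n"
    using assms by presburger+
  then show ?thesis
    unfolding split using assms border_at_1[of n x i] border_at_2[of n x i] border_at_3[of n x i]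
    by (simp only:)
qed

section \<open>Borders and the Thue--Morse morphism\<close>

definition tm_borders :: "nat \<Rightarrow> nat \<Rightarrow> nat set" where
  "tm_borders i n = {k. 0 < k \<and> k < n \<and> border_at tm i n k}"

lemma unbordered_factor_iff: "unbordered (factor thue_morse i n) \<longleftrightarrow> tm_borders i n = {}"
  unfolding unbordered_def bordered_factor_iff border_at_thue_morse tm_borders_def by auto

lemma tm_borders_1: "2 \<le> n \<Longrightarrow> 1 \<in> tm_borders i n \<longleftrightarrow> tm i = tm (i + n - 1)"
  using border_at_1[of n tm i] by (simp add: tm_borders_def)

lemma tm_shift_double:
  assumes "a < b"
  shows "(\<forall>y\<in>{a..<b}. tm y = tm (y + 2 * d)) \<longleftrightarrow> (\<forall>y\<in>{a div 2..<(b + 1) div 2}. tm y = tm (y + d))"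
proof
  assume fine: "\<forall>y\<in>{a..<b}. tm y = tm (y + 2 * d)"
  show "\<forall>y\<in>{a div 2..<(b + 1) div 2}. tm y = tm (y + d)"
  proof
    fix y
    assume y: "y \<in> {a div 2..<(b + 1) div 2}"
    obtain x where x: "x \<in> {a..<b}" "x div 2 = y"
    proof (cases "a \<le> 2 * y")
      case True
      with y show ?thesis
        by (intro that[of "2 * y"]) auto
    next
      case False
      with y assms show ?thesis
        by (intro that[of "2 * y + 1"]) auto
    qed
    have "tm x = tm (x + 2 * d)"
      using fine x(1) by blast
    moreover have "tm x \<longleftrightarrow> tm y \<noteq> odd x" "tm (x + 2 * d) \<longleftrightarrow> tm (y + d) \<noteq> odd x"
      using tm_eq_div2[of x] tm_eq_div2[of "x + 2 * d"] x(2) by (simp_all add: add.commute)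
    ultimately show "tm y = tm (y + d)"
      by blast
  qed
next
  assume coarse: "\<forall>y\<in>{a div 2..<(b + 1) div 2}. tm y = tm (y + d)"
  show "\<forall>y\<in>{a..<b}. tm y = tm (y + 2 * d)"
  proof
    fix y
    assume "y \<in> {a..<b}"
    then have "y div 2 \<in> {a div 2..<(b + 1) div 2}"
      by (auto intro: div_le_mono)
    with coarse show "tm y = tm (y + 2 * d)"
      using tm_eq_div2[of y] tm_eq_div2[of "y + 2 * d"] by (simp add: add.commute)
  qed
qed

text \<open>The factor of length \<open>n\<close> at \<open>i\<close> lies inside the image, under the Thue--Morse
  morphism \<open>0 \<mapsto> 01, 1 \<mapsto> 10\<close>, of the factor of length \<open>preimage_len i n\<close> at \<open>i div 2\<close>.\<close>

definition preimage_len :: "nat \<Rightarrow> nat \<Rightarrow> nat" where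
  "preimage_len i n = (i + n + 1) div 2 - i div 2"

lemma preimage_len_eq: "preimage_len i n = (if even i \<and> even n then n div 2 else n div 2 + 1)"
  unfolding preimage_len_def
  by (cases "even i"; cases "even n") (auto elim!: evenE oddE simp: algebra_simps)

lemma preimage_len_bounds: "n \<le> 2 * preimage_len i n" "2 * preimage_len i n \<le> n + 2"
  by (auto simp: preimage_len_eq elim!: evenE oddE)

lemma preimage_len_last: "0 < n \<Longrightarrow> (i + n - 1) div 2 = i div 2 + preimage_len i n - 1"
  by (cases "even i"; cases "even n") (auto elim!: evenE oddE simp: preimage_len_eq)

lemma preimage_len_inherited:
  "2 * preimage_len i n < n + 2 \<longleftrightarrow> \<not> (odd i \<and> even n)"
  "2 * preimage_len i n < n + 2 \<Longrightarrow> n + 2 - 2 * preimage_len i n = (if odd n then 1 else 2)"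
  by (cases "even i"; cases "even n"; auto simp: preimage_len_eq elim!: evenE oddE)+

lemma tm_border_even_shift:
  fixes i n k d :: nat
  assumes "0 < k" "k \<le> n" "n - k = 2 * d"
  defines "n' \<equiv> preimage_len i n"
  shows "border_at tm i n k \<longleftrightarrow> border_at tm (i div 2) n' (n' - d)"
proof -
  have "n = k + 2 * d"
    using assms(2,3) by linarith
  then have "(i + n + 1) div 2 = (i + k + 1) div 2 + d"
    by (simp add: add.assoc add.left_commute[of _ "2 * d"])
  moreover have "i div 2 < (i + k + 1) div 2"
    using assms(1) by presburger
  ultimately have "(i + k + 1) div 2 = i div 2 + (n' - d)" "n' - (n' - d) = d"
    unfolding n'_def preimage_len_def by linarith+
  then show ?thesis
    unfolding border_at_iff_shift using tm_shift_double[of i "i + k" d] assms(1,3) by simp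
qed

lemma tm_borders_even_shift:
  fixes i n k d :: nat
  assumes "0 < k" "k < n" "n - k = 2 * d"
  defines "n' \<equiv> preimage_len i n"
  shows "k \<in> tm_borders i n \<longleftrightarrow> n' - d \<in> tm_borders (i div 2) n'"
proof -
  have "0 < n' - d" "n' - d < n'"
    using assms preimage_len_bounds(1)[where i = i and n = n] unfolding n'_def by linarith+
  then show ?thesis
    using tm_border_even_shift[of k n d i] assms unfolding tm_borders_def n'_def by simp
qed

lemma tm_border_odd_shift_short:
  assumes "border_at tm i n k" "odd (n - k)"
  shows "k < 4"
proof (rule ccontr)
  assume "\<not> k < 4"
  with assms(1) have "\<forall>j<4. tm (i + j) = tm (i + (n - k) + j)"
    unfolding border_at_def by auto
  then have "even i \<longleftrightarrow> even (i + (n - k))"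
    by (rule tm_match4_parity)
  then have "even (n - k)"
    using even_add[of i "n - k"] by blast
  with assms(2) show False
    by simp
qed

lemma tm_borders_desubst:
  fixes i n :: nat
  assumes "4 \<le> n"
  defines "n' \<equiv> preimage_len i n"
  shows "tm_borders i n =
    (\<lambda>j. 2 * j + n - 2 * n') ` {j \<in> tm_borders (i div 2) n'. 2 * n' < 2 * j + n}
    \<union> {k \<in> {1, 2, 3}. odd (n - k) \<and> border_at tm i n k}"
    (is "_ = ?inherited \<union> ?short")
proof (intro set_eqI iffI)
  have n': "n \<le> 2 * n'" "2 * n' \<le> n + 2"
    unfolding n'_def by (rule preimage_len_bounds)+
  fix k
  show "k \<in> ?inherited \<union> ?short" if k: "k \<in> tm_borders i n"
  proof (cases "even (n - k)")
    case True
    then obtain d where d: "n - k = 2 * d" ..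
    from k have "0 < k" "k < n"
      unfolding tm_borders_def by simp_all
    with d k have "n' - d \<in> tm_borders (i div 2) n'"
      using tm_borders_even_shift[of k n d i] unfolding n'_def by simp
    moreover have "2 * n' < 2 * (n' - d) + n" "k = 2 * (n' - d) + n - 2 * n'"
      using \<open>0 < k\<close> \<open>k < n\<close> d n' by linarith+
    ultimately show ?thesis
      by blast
  next
    case False
    with k show ?thesis
      using tm_border_odd_shift_short[of i n k] unfolding tm_borders_def by auto
  qed
  show "k \<in> tm_borders i n" if "k \<in> ?inherited \<union> ?short"
    using that
  proof
    assume "k \<in> ?inherited"
    then obtain j where j: "j \<in> tm_borders (i div 2) n'" "2 * n' < 2 * j + n"
      and k: "k = 2 * j + n - 2 * n'"
      by blast
    then have "j < n'"
      unfolding tm_borders_def by simp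
    with j k n' have "0 < k" "k < n" "n - k = 2 * (n' - j)" "n' - (n' - j) = j"
      by linarith+
    with j(1) show ?thesis
      using tm_borders_even_shift[of k n "n' - j" i] unfolding n'_def by simp
  next
    assume "k \<in> ?short"
    with assms(1) show ?thesis
      unfolding tm_borders_def by auto
  qed
qed

datatype border_class = No_border | Only_border_1 | Other_borders

definition border_class :: "nat set \<Rightarrow> border_class" where
  "border_class B =
    (if B = {} then No_border else if B = {1} then Only_border_1 else Other_borders)"

lemma border_class_Other_iff: "border_class B = Other_borders \<longleftrightarrow> (\<exists>k\<in>B. k \<noteq> 1)"
  unfolding border_class_def by auto

lemma border_class_Other_desubst:
  assumes "4 \<le> n" "border_class (tm_borders (i div 2) (preimage_len i n)) = Other_borders"
  shows "border_class (tm_borders i n) = Other_borders"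
proof -
  define n' where "n' = preimage_len i n"
  obtain j where j: "j \<in> tm_borders (i div 2) n'" "j \<noteq> 1"
    using assms(2) unfolding border_class_Other_iff n'_def by blast
  then have "0 < j"
    unfolding tm_borders_def by simp
  with j(2) have "2 * n' < 2 * j + n" "2 * j + n - 2 * n' \<noteq> 1"
    using preimage_len_bounds[where i = i and n = n] unfolding n'_def by linarith+
  with j(1) show ?thesis
    unfolding border_class_Other_iff tm_borders_desubst[OF assms(1), of i, folded n'_def] by blast
qed

lemma border_class_desubst:
  fixes i n :: nat
  assumes "4 \<le> n"
  defines "q \<equiv> i div 2" and "n' \<equiv> preimage_len i n"
    and "B \<equiv> tm_borders (i div 2) (preimage_len i n)"
  shows "border_class (tm_borders i n) =
    (if border_class B = Other_borders then Other_borders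
     else border_class
      ((if tm q = tm (q + n' - 1) \<and> \<not> (odd i \<and> even n) then {if odd n then 1 else 2} else {})
       \<union> {k \<in> {1, 2, 3}. odd (n - k) \<and> border_at tm i n k}))"
proof (cases "border_class B = Other_borders")
  case True
  then show ?thesis
    using border_class_Other_desubst[OF assms(1)] unfolding B_def by simp
next
  case False
  have n': "n \<le> 2 * n'" "2 * n' \<le> n + 2"
    unfolding n'_def by (rule preimage_len_bounds)+
  from False have "B \<subseteq> {1}"
    unfolding border_class_Other_iff by blast
  then have "(\<lambda>j. 2 * j + n - 2 * n') ` {j \<in> B. 2 * n' < 2 * j + n} =
      (if 1 \<in> B \<and> 2 * n' < n + 2 then {n + 2 - 2 * n'} else {})"
    by (auto intro: image_eqI[where x = 1])
  also have "\<dots> = (if tm q = tm (q + n' - 1) \<and> \<not> (odd i \<and> even n) then {if odd n then 1 else 2} else {})"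
    using tm_borders_1[of n' q] n' assms(1) preimage_len_inherited[of i n]
    unfolding B_def q_def n'_def by auto
  finally show ?thesis
    using False unfolding tm_borders_desubst[OF assms(1), of i, folded n'_def, folded B_def[folded n'_def]]
    by (simp only: if_False)
qed

type_synonym tm_state = "border_class \<times> bool \<times> bool \<times> bool \<times> bool"

definition state :: "nat \<Rightarrow> nat \<Rightarrow> tm_state" where
  "state i n = (border_class (tm_borders i n), tm i, tm (i + 1), tm (i + n - 2), tm (i + n - 1))"

text \<open>\<open>next_state (odd i) (odd n)\<close> computes \<open>state i n\<close> from
  \<open>state (i div 2) (preimage_len i n)\<close> (lemma \<open>state_desubst\<close>). The letters are those of
  the morphic image; a preimage border of length at least 2 gives a border longer than 1, the
  preimage border of length 1 gives one of length 2, 1, 1 or none in the four cases, and the new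
  borders of length 1, 2 or 3 are read off the letters.\<close>

fun next_state :: "bool \<Rightarrow> bool \<Rightarrow> tm_state \<Rightarrow> tm_state" where
  "next_state False False (c, a0, a1, b1, b0) =
    (if c = No_border \<and> \<not> (a1 = a0 \<and> b1 \<noteq> a0) then Only_border_1 else Other_borders,
     a0, \<not> a0, b0, \<not> b0)"
| "next_state False True (c, a0, a1, b1, b0) =
    (if c = No_border \<and> b1 = a0 then No_border
     else if c = Only_border_1 then Only_border_1 else Other_borders,
     a0, \<not> a0, \<not> b1, b0)"
| "next_state True True (c, a0, a1, b1, b0) =
    (if c = No_border \<and> a1 \<noteq> a0 then No_border
     else if c = Only_border_1 then Only_border_1 else Other_borders,
     \<not> a0, a1, b0, \<not> b0)"
| "next_state True False (c, a0, a1, b1, b0) =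
    (if c = Only_border_1 then No_border
     else if c = No_border \<and> \<not> (b1 \<noteq> a0 \<and> a1 = a0) then Only_border_1 else Other_borders,
     \<not> a0, a1, \<not> b1, b0)"

lemma tm_ends_desubst:
  fixes i n :: nat
  assumes "4 \<le> n"
  defines "q \<equiv> i div 2" and "n' \<equiv> preimage_len i n"
  shows "tm i \<longleftrightarrow> tm q \<noteq> odd i"
    and "tm (i + 1) \<longleftrightarrow> (if odd i then tm (q + 1) else \<not> tm q)"
    and "tm (i + 2) \<longleftrightarrow> tm (q + 1) \<noteq> odd i"
    and "tm (i + n - 1) \<longleftrightarrow> tm (q + n' - 1) \<noteq> (odd i = odd n)"
    and "tm (i + n - 2) \<longleftrightarrow> (if odd i = odd n then tm (q + n' - 1) else \<not> tm (q + n' - 2))"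
    and "tm (i + n - 3) \<longleftrightarrow> tm (q + n' - 2) \<noteq> (odd i = odd n)"
proof -
  show "tm i \<longleftrightarrow> tm q \<noteq> odd i" "tm (i + 1) \<longleftrightarrow> (if odd i then tm (q + 1) else \<not> tm q)"
    "tm (i + 2) \<longleftrightarrow> tm (q + 1) \<noteq> odd i"
    unfolding q_def by (rule tm_eq_div2 tm_Suc_eq_div2 tm_add2_eq_div2)+
  define l where "l = i + n - 1"
  have "l div 2 = q + n' - 1"
    using assms(1) unfolding l_def q_def n'_def by (intro preimage_len_last) simp
  moreover from this have "l div 2 - 1 = q + n' - 2"
    by simp
  moreover have "odd l \<longleftrightarrow> odd i = odd n"
    using assms(1) unfolding l_def by presburger
  moreover have "1 < l"
    using assms(1) unfolding l_def by linarith
  moreover have "i + n - 1 = l" "i + n - 2 = l - 1" "i + n - 3 = l - 2"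
    unfolding l_def by simp_all
  ultimately show "tm (i + n - 1) \<longleftrightarrow> tm (q + n' - 1) \<noteq> (odd i = odd n)"
    "tm (i + n - 2) \<longleftrightarrow> (if odd i = odd n then tm (q + n' - 1) else \<not> tm (q + n' - 2))"
    "tm (i + n - 3) \<longleftrightarrow> tm (q + n' - 2) \<noteq> (odd i = odd n)"
    using tm_eq_div2[of l] tm_diff1_eq_div2[of l] tm_diff2_eq_div2[of l] by simp_all
qed

lemma state_desubst:
  assumes "4 \<le> n"
  shows "state i n = next_state (odd i) (odd n) (state (i div 2) (preimage_len i n))"
proof -
  define q n' where "q = i div 2" and "n' = preimage_len i n"
  define c where "c = border_class (tm_borders q n')"
  have "1 \<in> tm_borders q n' \<longleftrightarrow> tm q = tm (q + n' - 1)"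
    using assms preimage_len_bounds(1)[where i = i and n = n] unfolding n'_def
    by (intro tm_borders_1) linarith
  then have "c = No_border \<Longrightarrow> tm q \<noteq> tm (q + n' - 1)"
    and "c = Only_border_1 \<Longrightarrow> tm q = tm (q + n' - 1)"
    unfolding c_def border_class_def by (auto split: if_splits)
  then show ?thesis
    unfolding state_def border_class_desubst[OF assms, of i, folded q_def n'_def c_def]
      short_borders_odd_shift[OF assms] tm_ends_desubst[OF assms, of i, folded q_def n'_def]
      q_def[symmetric] n'_def[symmetric] c_def[symmetric]
    by (cases "odd i"; cases "odd n"; cases c) (auto simp: border_class_def)
qed

lemma state_2:
  "state i 2 = (if tm i = tm (i + 1) then Only_border_1 else No_border, tm i, tm (i + 1), tm i, tm (i + 1))"
proof -
  have "{k. 0 < k \<and> k < 2 \<and> P k} = (if P 1 then {1} else {})" for P :: "nat \<Rightarrow> bool"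
    by (auto simp: numeral_2_eq_2 less_Suc_eq)
  then have "tm_borders i 2 = (if tm i = tm (i + 1) then {1} else {})"
    unfolding tm_borders_def using border_at_1[of 2 tm i] by simp
  then show ?thesis
    by (simp add: state_def border_class_def)
qed

lemma state_3:
  "state i 3 = (if tm i = tm (i + 2) then Only_border_1 else No_border, tm i, tm (i + 1), tm (i + 1), tm (i + 2))"
proof -
  have "{k. 0 < k \<and> k < 3 \<and> P k} = (if P 1 then {1} else {}) \<union> (if P 2 then {2} else {})"
    for P :: "nat \<Rightarrow> bool"
    by (auto simp: numeral_3_eq_3 numeral_2_eq_2 less_Suc_eq)
  moreover have "\<not> border_at tm i 3 2"
    using border_at_2[of 3 tm i] tm_not_three_equal[of i] by (simp add: add.commute)
  ultimately have "tm_borders i 3 = (if tm i = tm (i + 2) then {1} else {})"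
    unfolding tm_borders_def using border_at_1[of 3 tm i] by simp
  moreover have "i + 3 - 2 = i + 1" "i + 3 - 1 = i + 2"
    by simp_all
  ultimately show ?thesis
    by (simp add: state_def border_class_def)
qed

lemma next_state_Other: "fst s = Other_borders \<Longrightarrow> fst (next_state r t s) = Other_borders"
  by (cases r; cases t; cases s) auto

text \<open>Since \<open>Other_borders\<close> is absorbing, states of that class can be discarded.\<close>

definition prune :: "tm_state set \<Rightarrow> tm_state set" where
  "prune A = {s \<in> A. fst s \<noteq> Other_borders}"

lemma prune_Un: "prune (A \<union> B) = prune A \<union> prune B"
  unfolding prune_def by auto

lemma prune_next_state: "prune (next_state r t ` A) = prune (next_state r t ` prune A)"
  unfolding prune_def using next_state_Other by blast

definition states :: "nat \<Rightarrow> tm_state set" where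
  "states n = prune (range (\<lambda>i. state i n))"

definition even_states :: "tm_state set \<Rightarrow> tm_state set \<Rightarrow> tm_state set" where
  "even_states A B = prune (next_state False False ` A \<union> next_state True False ` B)"

definition odd_states :: "tm_state set \<Rightarrow> tm_state set" where
  "odd_states B = prune (next_state False True ` B \<union> next_state True True ` B)"

lemma state_double:
  assumes "2 \<le> m"
  shows "state (2 * q) (2 * m) = next_state False False (state q m)"
    and "state (Suc (2 * q)) (2 * m) = next_state True False (state q (Suc m))"
    and "state (2 * q) (Suc (2 * m)) = next_state False True (state q (Suc m))"
    and "state (Suc (2 * q)) (Suc (2 * m)) = next_state True True (state q (Suc m))"
proof -
  have "4 \<le> 2 * m" "4 \<le> Suc (2 * m)"
    using assms by simp_all
  note desubst = state_desubst[OF this(1)] state_desubst[OF this(2)]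
  show "state (2 * q) (2 * m) = next_state False False (state q m)"
    using desubst(1)[of "2 * q"] by (simp add: preimage_len_eq)
  show "state (Suc (2 * q)) (2 * m) = next_state True False (state q (Suc m))"
    using desubst(1)[of "Suc (2 * q)"] by (simp add: preimage_len_eq)
  show "state (2 * q) (Suc (2 * m)) = next_state False True (state q (Suc m))"
    using desubst(2)[of "2 * q"] by (simp add: preimage_len_eq)
  show "state (Suc (2 * q)) (Suc (2 * m)) = next_state True True (state q (Suc m))"
    using desubst(2)[of "Suc (2 * q)"] by (simp add: preimage_len_eq)
qed

lemma range_split_parity: "range f = range (\<lambda>q. f (2 * q)) \<union> range (\<lambda>q. f (Suc (2 * q)))"
proof (intro set_eqI iffI)
  fix y
  assume "y \<in> range f"
  then obtain i where "y = f i"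
    by blast
  then show "y \<in> range (\<lambda>q. f (2 * q)) \<union> range (\<lambda>q. f (Suc (2 * q)))"
    by (cases "even i") (auto elim!: evenE oddE)
qed auto

lemma prune_range_next_state:
  "prune (range (\<lambda>q. next_state r t (state q n))) = prune (next_state r t ` states n)"
  unfolding states_def prune_next_state[symmetric] by (simp add: image_image)

lemma states_double:
  assumes "2 \<le> m"
  shows "states (2 * m) = even_states (states m) (states (m + 1))"
proof -
  have "states (2 * m) =
      prune (range (\<lambda>q. state (2 * q) (2 * m)) \<union> range (\<lambda>q. state (Suc (2 * q)) (2 * m)))"
    unfolding states_def by (subst range_split_parity) (rule refl)
  also have "\<dots> = even_states (states m) (states (m + 1))"
    unfolding even_states_def state_double[OF assms] prune_Un prune_range_next_state by simp
  finally show ?thesis .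
qed

lemma states_double_Suc:
  assumes "2 \<le> m"
  shows "states (Suc (2 * m)) = odd_states (states (m + 1))"
proof -
  have "states (Suc (2 * m)) =
      prune (range (\<lambda>q. state (2 * q) (Suc (2 * m))) \<union> range (\<lambda>q. state (Suc (2 * q)) (Suc (2 * m))))"
    unfolding states_def by (subst range_split_parity) (rule refl)
  also have "\<dots> = odd_states (states (m + 1))"
    unfolding odd_states_def state_double[OF assms] prune_Un prune_range_next_state by simp
  finally show ?thesis .
qed

type_synonym window = "tm_state set \<times> tm_state set \<times> tm_state set"

text \<open>The recurrences for \<open>states n\<close> refer to the lengths \<open>n div 2\<close> and \<open>n div 2 + 1\<close>,
  so windows of three consecutive lengths evolve with the binary digits of \<open>n\<close>.\<close>

definition window :: "nat \<Rightarrow> window" where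
  "window n = (states n, states (n + 1), states (n + 2))"

fun window_step :: "nat \<Rightarrow> window \<Rightarrow> window" where
  "window_step b (A, B, C) =
    (if b = 0 then (even_states A B, odd_states B, even_states B C)
     else (odd_states B, even_states B C, odd_states C))"

lemma window_double:
  assumes "2 \<le> m" "b < 2"
  shows "window (2 * m + b) = window_step b (window m)"
proof -
  have "states (2 * m + 2) = even_states (states (m + 1)) (states (m + 2))"
    "states (2 * m + 3) = odd_states (states (m + 2))"
    using states_double[of "m + 1"] states_double_Suc[of "m + 1"] assms(1)
    by (simp_all add: algebra_simps numeral_eq_Suc)
  with assms show ?thesis
    unfolding window_def using states_double[OF assms(1)] states_double_Suc[OF assms(1)]
    by (cases b) (simp_all add: numeral_eq_Suc)
qed

section \<open>An automaton for the exceptional lengths\<close>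

text \<open>The minimal automaton of \<open>1(01\<^sup>*0)\<^sup>*10\<^sup>*1\<close>: \<open>Blocks\<close> after \<open>1(01\<^sup>*0)\<^sup>*\<close>,
  \<open>Open_block\<close> inside a block \<open>01\<^sup>*\<close>, \<open>Zeros\<close> after the final \<open>10\<^sup>*\<close>.\<close>

datatype dfa_state = Start | Blocks | Open_block | Zeros | Accept | Dead

fun dfa_step :: "dfa_state \<Rightarrow> nat \<Rightarrow> dfa_state" where
  "dfa_step Start b = (if b = 1 then Blocks else Dead)"
| "dfa_step Blocks b = (if b = 0 then Open_block else if b = 1 then Zeros else Dead)"
| "dfa_step Open_block b = (if b = 0 then Blocks else if b = 1 then Open_block else Dead)"
| "dfa_step Zeros b = (if b = 0 then Zeros else if b = 1 then Accept else Dead)"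
| "dfa_step Accept b = Dead"
| "dfa_step Dead b = Dead"

definition dfa_run :: "nat list \<Rightarrow> dfa_state" where
  "dfa_run w = foldl dfa_step Start w"

lemma dfa_run_snoc: "dfa_run (w @ [b]) = dfa_step (dfa_run w) b"
  unfolding dfa_run_def by simp

lemma dfa_run_Start: "dfa_run w = Start \<Longrightarrow> w = []"
proof -
  have "dfa_step d b \<noteq> Start" for d b
    by (cases d) auto
  then show "dfa_run w = Start \<Longrightarrow> w = []"
    by (cases w rule: rev_cases) (auto simp: dfa_run_snoc)
qed

lemma dfa_run_bin_digit:
  "b < 2 \<Longrightarrow> 0 < 2 * n + b \<Longrightarrow> dfa_run (bin (2 * n + b)) = dfa_step (dfa_run (bin n)) b"
  by (simp add: bin_append_digit dfa_run_snoc)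

definition zero_block :: "nat list set" where
  "zero_block = lconc {[0]} (lconc (lstar {[1]}) {[0]})"

definition blocks :: "nat list set" where
  "blocks = lconc {[1]} (lstar zero_block)"

lemma L_exc_eq: "L_exc = {[1] @ u @ [1] @ v @ [1] |u v. u \<in> lstar zero_block \<and> v \<in> lstar {[0]}}"
  unfolding L_exc_def zero_block_def lconc_def by blast

lemma foldl_dfa_step_ones: "set ws \<subseteq> {[1]} \<Longrightarrow> foldl dfa_step Open_block (concat ws) = Open_block"
  by (induction ws) auto

lemma foldl_dfa_step_zeros: "set ws \<subseteq> {[0]} \<Longrightarrow> foldl dfa_step Zeros (concat ws) = Zeros"
  by (induction ws) auto

lemma foldl_dfa_step_zero_blocks: "set ws \<subseteq> zero_block \<Longrightarrow> foldl dfa_step Blocks (concat ws) = Blocks"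
proof (induction ws)
  case (Cons x ws)
  then obtain os where "x = [0] @ concat os @ [0]" "set os \<subseteq> {[1]}"
    unfolding zero_block_def lconc_def lstar_def by auto
  with Cons show ?case
    using foldl_dfa_step_ones by simp
qed simp

lemma L_exc_imp_Accept: "w \<in> L_exc \<Longrightarrow> dfa_run w = Accept"
  unfolding L_exc_eq lstar_def dfa_run_def
  using foldl_dfa_step_zero_blocks foldl_dfa_step_zeros by auto

lemma one_in_blocks: "[1] \<in> blocks"
proof -
  have "[] \<in> lstar zero_block"
    unfolding lstar_def by (auto intro: exI[of _ "[]"])
  then show ?thesis
    unfolding blocks_def lconc_def by auto
qed

definition open_blocks :: "nat list set" where
  "open_blocks = {u @ [0] @ concat os |u os. u \<in> blocks \<and> set os \<subseteq> {[1]}}"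

definition trailing_zeros :: "nat list set" where
  "trailing_zeros = {u @ [1] @ concat zs |u zs. u \<in> blocks \<and> set zs \<subseteq> {[0]}}"

lemma blocks_snoc_0: "w \<in> blocks \<Longrightarrow> w @ [0] \<in> open_blocks"
  unfolding open_blocks_def by (intro CollectI exI[of _ w] exI[of _ "[]"]) simp

lemma blocks_snoc_1: "w \<in> blocks \<Longrightarrow> w @ [1] \<in> trailing_zeros"
  unfolding trailing_zeros_def by (intro CollectI exI[of _ w] exI[of _ "[]"]) simp

lemma open_blocks_snoc_0: "w \<in> open_blocks \<Longrightarrow> w @ [0] \<in> blocks"
proof -
  assume "w \<in> open_blocks"
  then obtain u os where "u \<in> blocks" "set os \<subseteq> {[1]}" "w = u @ [0] @ concat os"
    unfolding open_blocks_def by blast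
  then obtain ws where "w @ [0] = [1] @ concat (ws @ [[0] @ concat os @ [0]])"
    and "set (ws @ [[0] @ concat os @ [0]]) \<subseteq> zero_block"
    unfolding blocks_def zero_block_def lconc_def lstar_def by auto
  then show ?thesis
    unfolding blocks_def lconc_def lstar_def by blast
qed

lemma open_blocks_snoc_1: "w \<in> open_blocks \<Longrightarrow> w @ [1] \<in> open_blocks"
proof -
  assume "w \<in> open_blocks"
  then obtain u os where "u \<in> blocks" "set os \<subseteq> {[1]}" "w = u @ [0] @ concat os"
    unfolding open_blocks_def by blast
  then show ?thesis
    unfolding open_blocks_def by (intro CollectI exI[of _ u] exI[of _ "os @ [[1]]"]) simp
qed

lemma trailing_zeros_snoc_0: "w \<in> trailing_zeros \<Longrightarrow> w @ [0] \<in> trailing_zeros"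
proof -
  assume "w \<in> trailing_zeros"
  then obtain u zs where "u \<in> blocks" "set zs \<subseteq> {[0]}" "w = u @ [1] @ concat zs"
    unfolding trailing_zeros_def by blast
  then show ?thesis
    unfolding trailing_zeros_def by (intro CollectI exI[of _ u] exI[of _ "zs @ [[0]]"]) simp
qed

lemma trailing_zeros_snoc_1: "w \<in> trailing_zeros \<Longrightarrow> w @ [1] \<in> L_exc"
proof -
  assume "w \<in> trailing_zeros"
  then obtain u zs where "u \<in> blocks" "set zs \<subseteq> {[0]}" "w = u @ [1] @ concat zs"
    unfolding trailing_zeros_def by blast
  then show ?thesis
    unfolding blocks_def L_exc_eq lconc_def lstar_def by force
qed

lemma dfa_run_invariant:
  "(dfa_run w = Blocks \<longrightarrow> w \<in> blocks) \<and> (dfa_run w = Open_block \<longrightarrow> w \<in> open_blocks)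
   \<and> (dfa_run w = Zeros \<longrightarrow> w \<in> trailing_zeros) \<and> (dfa_run w = Accept \<longrightarrow> w \<in> L_exc)"
proof (induction w rule: rev_induct)
  case (snoc b w)
  then show ?case
    using dfa_run_Start[of w] one_in_blocks blocks_snoc_0 blocks_snoc_1 open_blocks_snoc_0
      open_blocks_snoc_1 trailing_zeros_snoc_0 trailing_zeros_snoc_1
    by (cases "dfa_run w") (auto simp: dfa_run_snoc dfa_run_def)
qed (simp add: dfa_run_def)

lemma L_exc_iff_Accept: "w \<in> L_exc \<longleftrightarrow> dfa_run w = Accept"
  using L_exc_imp_Accept dfa_run_invariant by blast

section \<open>The reachable product automaton\<close>

definition product_step :: "nat \<Rightarrow> window \<times> dfa_state \<Rightarrow> window \<times> dfa_state" where
  "product_step b = (\<lambda>(w, d). (window_step b w, dfa_step d b))"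

definition state_sets :: "tm_state set list" where
  "state_sets =
   [set [(No_border, False, True, False, True), (No_border, True, False, True, False),
      (Only_border_1, False, False, False, False), (Only_border_1, True, True, True, True)],
    set [(No_border, False, False, False, True), (No_border, False, True, True, True),
      (No_border, True, False, False, False), (No_border, True, True, True, False),
      (Only_border_1, False, True, True, False), (Only_border_1, True, False, False, True)],
    set [(No_border, False, False, True, True), (No_border, True, True, False, False),
      (Only_border_1, False, False, True, False), (Only_border_1, False, True, False, False),
      (Only_border_1, False, True, True, False), (Only_border_1, True, False, False, True),
      (Only_border_1, True, False, True, True), (Only_border_1, True, True, False, True)],
    set [(No_border, False, False, False, True), (No_border, False, False, True, True),
      (No_border, False, True, True, True), (No_border, True, False, False, False),
      (No_border, True, True, False, False), (No_border, True, True, True, False),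
      (Only_border_1, False, True, True, False), (Only_border_1, True, False, False, True)],
    set [(Only_border_1, False, False, True, False), (Only_border_1, False, True, False, False),
      (Only_border_1, False, True, True, False), (Only_border_1, True, False, False, True),
      (Only_border_1, True, False, True, True), (Only_border_1, True, True, False, True)],
    set [(No_border, False, False, False, True), (No_border, False, True, True, True),
      (No_border, True, False, False, False), (No_border, True, True, True, False),
      (Only_border_1, False, False, True, False), (Only_border_1, False, True, False, False),
      (Only_border_1, True, False, True, True), (Only_border_1, True, True, False, True)],
    set [(No_border, False, False, False, True), (No_border, False, False, True, True),
      (No_border, False, True, True, True), (No_border, True, False, False, False),
      (No_border, True, True, False, False), (No_border, True, True, True, False),
      (Only_border_1, False, False, True, False), (Only_border_1, False, True, False, False),
      (Only_border_1, False, True, True, False), (Only_border_1, True, False, False, True),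
      (Only_border_1, True, False, True, True), (Only_border_1, True, True, False, True)],
    set [(No_border, False, False, False, True), (No_border, False, True, True, True),
      (No_border, True, False, False, False), (No_border, True, True, True, False),
      (Only_border_1, False, False, True, False), (Only_border_1, False, True, False, False),
      (Only_border_1, False, True, True, False), (Only_border_1, True, False, False, True),
      (Only_border_1, True, False, True, True), (Only_border_1, True, True, False, True)]]
"

text \<open>The part of the product of \<open>window_step\<close> and \<open>dfa_step\<close> reachable from the
  windows at \<open>2\<close> and \<open>3\<close>, found by exhaustive search; windows are given by indices into
  \<open>state_sets\<close>.\<close>

definition reachable :: "(window \<times> dfa_state) list" where
  "reachable = map (\<lambda>((a, b, c), d). ((state_sets ! a, state_sets ! b, state_sets ! c), d))
    [((0, 1, 2), Open_block), ((1, 2, 5), Zeros), ((3, 4, 5), Zeros), ((6, 7, 3), Blocks),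
     ((6, 7, 6), Dead), ((6, 7, 2), Open_block), ((7, 3, 4), Open_block), ((7, 6, 7), Dead),
     ((7, 2, 5), Zeros), ((5, 3, 4), Open_block), ((5, 7, 6), Dead), ((5, 7, 2), Open_block),
     ((2, 5, 3), Blocks), ((4, 5, 7), Accept)]"

lemma reachable_closed:
  "\<forall>p\<in>set reachable. product_step 0 p \<in> set reachable \<and> product_step 1 p \<in> set reachable"
  unfolding reachable_def state_sets_def by code_simp

lemma reachable_accepting:
  "\<forall>((A, _, _), d)\<in>set reachable. (\<exists>s\<in>A. fst s = No_border) \<longleftrightarrow> d \<noteq> Accept"
  unfolding reachable_def state_sets_def by code_simp

lemma reachable_base:
  "even_states (state_sets ! 0) (state_sets ! 1) = state_sets ! 2"
  "odd_states (state_sets ! 1) = state_sets ! 5"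
  "((state_sets ! 0, state_sets ! 1, state_sets ! 2), Open_block) \<in> set reachable"
  "((state_sets ! 1, state_sets ! 2, state_sets ! 5), Zeros) \<in> set reachable"
  unfolding reachable_def state_sets_def by code_simp+

lemma states_2: "states 2 = state_sets ! 0"
proof -
  have "range (\<lambda>i. state i 2) =
      (\<lambda>(a, b). (if a = b then Only_border_1 else No_border, a, b, a, b)) ` range (\<lambda>i. (tm i, tm (i + 1)))"
    unfolding state_2 image_image by simp
  also have "range (\<lambda>i. (tm i, tm (i + 1))) = set [(False, False), (False, True), (True, False), (True, True)]"
    unfolding tm_factors_2 by auto
  finally have "states 2 = prune ((\<lambda>(a, b). (if a = b then Only_border_1 else No_border, a, b, a, b)) `
      set [(False, False), (False, True), (True, False), (True, True)])"
    unfolding states_def by simp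
  also have "\<dots> = state_sets ! 0"
    unfolding prune_def state_sets_def by code_simp
  finally show ?thesis .
qed

lemma states_3: "states 3 = state_sets ! 1"
proof -
  have "range (\<lambda>i. state i 3) =
      (\<lambda>(a, b, c). (if a = c then Only_border_1 else No_border, a, b, b, c)) `
        range (\<lambda>i. (tm i, tm (i + 1), tm (i + 2)))"
    unfolding state_3 image_image by simp
  also have "range (\<lambda>i. (tm i, tm (i + 1), tm (i + 2))) =
      set [(False, False, True), (False, True, False), (False, True, True),
        (True, False, False), (True, False, True), (True, True, False)]"
    unfolding tm_factors_3 by auto
  finally have "states 3 = prune ((\<lambda>(a, b, c). (if a = c then Only_border_1 else No_border, a, b, b, c)) `
      set [(False, False, True), (False, True, False), (False, True, True),
        (True, False, False), (True, False, True), (True, True, False)])"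
    unfolding states_def by simp
  also have "\<dots> = state_sets ! 1"
    unfolding prune_def state_sets_def by code_simp
  finally show ?thesis .
qed

lemma window_2_3:
  "window 2 = (state_sets ! 0, state_sets ! 1, state_sets ! 2)"
  "window 3 = (state_sets ! 1, state_sets ! 2, state_sets ! 5)"
proof -
  have "states 4 = even_states (states 2) (states 3)" "states 5 = odd_states (states 3)"
    using states_double[of 2] states_double_Suc[of 2] by simp_all
  then have "states 4 = state_sets ! 2" "states 5 = state_sets ! 5"
    unfolding states_2 states_3 reachable_base(1,2) by simp_all
  then show "window 2 = (state_sets ! 0, state_sets ! 1, state_sets ! 2)"
    "window 3 = (state_sets ! 1, state_sets ! 2, state_sets ! 5)"
    unfolding window_def by (simp_all add: states_2 states_3)
qed

lemma window_reachable: "2 \<le> n \<Longrightarrow> (window n, dfa_run (bin n)) \<in> set reachable"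
proof (induction n rule: less_induct)
  case (less n)
  consider "n = 2" | "n = 3" | "4 \<le> n"
    using less.prems by linarith
  then show ?case
  proof cases
    case 1
    have "dfa_run (bin 2) = Open_block"
      by (simp add: bin.simps dfa_run_def)
    with 1 show ?thesis
      using window_2_3(1) reachable_base(3) by simp
  next
    case 2
    have "dfa_run (bin 3) = Zeros"
      by (simp add: bin.simps dfa_run_def)
    with 2 show ?thesis
      using window_2_3(2) reachable_base(4) by simp
  next
    case 3
    define m b where "m = n div 2" and "b = n mod 2"
    then have n: "n = 2 * m + b" "b < 2" "2 \<le> m" "m < n"
      using 3 by auto
    with less.IH have "(window m, dfa_run (bin m)) \<in> set reachable"
      by blast
    then have "product_step b (window m, dfa_run (bin m)) \<in> set reachable"
      using reachable_closed n(2) by (cases b) auto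
    then show ?thesis
      using window_double[of m b] dfa_run_bin_digit[of b m] n by (simp add: product_step_def)
  qed
qed

lemma unbordered_factor_iff_states:
  "(\<exists>i. unbordered (factor thue_morse i n)) \<longleftrightarrow> (\<exists>s\<in>states n. fst s = No_border)"
  unfolding unbordered_factor_iff states_def prune_def state_def border_class_def by auto

lemma states_No_border_iff: "(\<exists>s\<in>states n. fst s = No_border) \<longleftrightarrow> dfa_run (bin n) \<noteq> Accept"
proof (cases "2 \<le> n")
  case True
  then show ?thesis
    using bspec[OF reachable_accepting window_reachable[OF True]] unfolding window_def by simp
next
  case False
  then have "tm_borders 0 n = {}"
    unfolding tm_borders_def by auto
  then have "state 0 n \<in> states n" "fst (state 0 n) = No_border"
    unfolding states_def prune_def state_def border_class_def by auto
  moreover from False have "n = 0 \<or> n = 1"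
    by auto
  then have "dfa_run (bin n) \<noteq> Accept"
    by (elim disjE) (simp_all add: bin.simps dfa_run_def)
  ultimately show ?thesis
    by blast
qed

theorem theorem4:
  fixes n :: nat
  shows "(\<exists>i. unbordered (factor thue_morse i n)) \<longleftrightarrow> bin n \<notin> L_exc"
  using unbordered_factor_iff_states states_No_border_iff L_exc_iff_Accept by blast

end
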